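(* Let $D^*:\mathcal{A}\to\mathcal{A}$ be defined by $D^*v=\mathrm{Res}_w\, w^{-2}(\mathrm{Id}\otimes c)Y(w)v$ (the coefficient of $w^1$ in $(\mathrm{Id}\otimes c)Y(w)v\in\mathcal{A}[w]$). Then $D^*$ is a derivation of $\mathcal{A}$ with $D^*(t_{a,b})=b\,t_{a,b-1}$ for all $a,b\ge0$ (in particular $D^*(t_{0,n})=n\,t_{0,n-1}$, $D^*(t_{2,0})=0$), and the identity $$\frac{d}{dw}Y(w)=Y(w)D^*-(\mathrm{Id}\otimes D^* )Y(w)$$ holds as maps $\mathcal{A}\to(\mathcal{A}\otimes\mathcal{A})(\!(w^{-1})\!)$.
   Context: Fix $\epsilon_1+\epsilon_2+\epsilon_3=0$, $\sigma_2=\epsilon_1^2+\epsilon_1\epsilon_2+\epsilon_2^2$, $\sigma_3=\epsilon_1\epsilon_2\epsilon_3$. $\mathcal{A}=U_{\epsilon_1}(\mathfrak{gl}_1\otimes\mathrm{Diff}_{\epsilon_2}(\mathbb{C}))$ is the associative algebra with elements $t_{m,n}$ ($m,n\ge0$) satisfying $[t_{0,0},t_{c,d}]=0$, $[t_{1,0},t_{c,d}]=d\,t_{c,d-1}$, $[t_{0,1},t_{c,d}]=-c\,t_{c-1,d}$, $[t_{2,0},t_{c,d}]=2d\,t_{c+1,d-1}$, $[t_{1,1},t_{c,d}]=(d-c)t_{c,d}$, $[t_{0,2},t_{c,d}]=-2c\,t_{c-1,d+1}$, and $[t_{3,0},t_{c,d}]=3d\,t_{c+2,d-1}+\sigma_2\frac{d(d-1)(d-2)}{4}t_{c,d-3}+\frac{3}{2}\sigma_3\sum_{m=0}^{d-3}\sum_{n=0}^{c}\frac{\binom{m+n+1}{n+1}(n+1)\binom{d-m+c-n-2}{c-n+1}(c-n+1)}{\binom{d+c}{c}}t_{n,m}t_{c-n,d-3-m}$;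 it is generated by $t_{2,0}$ and $t_{0,n}$, $n\ge0$. $Y(w)=\Delta_{\mathcal{A}}:\mathcal{A}\to(\mathcal{A}\otimes\mathcal{A})(\!(w^{-1})\!)$ is the algebra homomorphism with $Y(w)t_{0,n}=1\otimes t_{0,n}+\sum_{m=0}^n\binom{n}{m}w^{n-m}t_{0,m}\otimes1$ and $Y(w)t_{2,0}=1\otimes t_{2,0}+t_{2,0}\otimes1+2\sigma_3\sum_{m,n\ge0}\frac{(m+n+1)!}{m!n!}(-1)^nw^{-n-m-2}t_{0,n}\otimes t_{0,m}$. $c:\mathcal{A}\to\mathbb{C}$ is the augmentation algebra homomorphism with $c(1)=1$, $c(t_{a,b})=0$. *)

theory Defs
  imports Complex_Main
begin

text \<open>A ring 'a is a C-algebra via sc, where z . x := sc z * x.\<close>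
definition calg :: "(complex \<Rightarrow> 'a::ring_1) \<Rightarrow> bool" where
  "calg sc \<longleftrightarrow> (\<forall>z w. sc (z + w) = sc z + sc w) \<and> (\<forall>z w. sc (z * w) = sc z * sc w)
     \<and> sc 1 = 1 \<and> (\<forall>z x. sc z * x = x * sc z)"

definition clinear_map :: "(complex \<Rightarrow> 'a::ring_1) \<Rightarrow> (complex \<Rightarrow> 'b::ring_1) \<Rightarrow> ('a \<Rightarrow> 'b) \<Rightarrow> bool" where
  "clinear_map scA scB f \<longleftrightarrow> (\<forall>x y. f (x + y) = f x + f y) \<and> (\<forall>z x. f (scA z * x) = scB z * f x)"

definition cbilinear :: "(complex \<Rightarrow> 'a::ring_1) \<Rightarrow> (complex \<Rightarrow> 'b::ring_1) \<Rightarrow> ('a \<Rightarrow> 'a \<Rightarrow> 'b) \<Rightarrow> bool" where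
  "cbilinear scA scB f \<longleftrightarrow> (\<forall>y. clinear_map scA scB (\<lambda>x. f x y)) \<and> (\<forall>x. clinear_map scA scB (f x))"

definition comm :: "'a::ring \<Rightarrow> 'a \<Rightarrow> 'a" where
  "comm x y = x * y - y * x"

inductive_set alg_gen :: "(complex \<Rightarrow> 'a::ring_1) \<Rightarrow> 'a set \<Rightarrow> 'a set" for sc G where
  gen: "x \<in> G \<Longrightarrow> x \<in> alg_gen sc G"
| scal: "sc z \<in> alg_gen sc G"
| add: "x \<in> alg_gen sc G \<Longrightarrow> y \<in> alg_gen sc G \<Longrightarrow> x + y \<in> alg_gen sc G"
| mult: "x \<in> alg_gen sc G \<Longrightarrow> y \<in> alg_gen sc G \<Longrightarrow> x * y \<in> alg_gen sc G"

text \<open>'b with tens x y = x \<otimes> y is the tensor square of the C-algebra 'a (as an algebra,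
  with factorwise multiplication); universal property stated for targets 'a and 'b.\<close>
definition is_tensor_square ::
  "(complex \<Rightarrow> 'a::ring_1) \<Rightarrow> (complex \<Rightarrow> 'b::ring_1) \<Rightarrow> ('a \<Rightarrow> 'a \<Rightarrow> 'b) \<Rightarrow> bool" where
  "is_tensor_square sc sc2 tens \<longleftrightarrow> calg sc2 \<and> cbilinear sc sc2 tens \<and> tens 1 1 = 1
     \<and> (\<forall>x y x' y'. tens x y * tens x' y' = tens (x * x') (y * y'))
     \<and> (\<forall>f::'a \<Rightarrow> 'a \<Rightarrow> 'a. cbilinear sc sc f \<longrightarrow>
           (\<exists>!L. clinear_map sc2 sc L \<and> (\<forall>x y. L (tens x y) = f x y)))
     \<and> (\<forall>f::'a \<Rightarrow> 'a \<Rightarrow> 'b. cbilinear sc sc2 f \<longrightarrow>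
           (\<exists>!L. clinear_map sc2 sc2 L \<and> (\<forall>x y. L (tens x y) = f x y)))"

definition tlift :: "(complex \<Rightarrow> 'b::ring_1) \<Rightarrow> (complex \<Rightarrow> 'c::ring_1) \<Rightarrow> ('a \<Rightarrow> 'a \<Rightarrow> 'b)
    \<Rightarrow> ('a \<Rightarrow> 'a \<Rightarrow> 'c) \<Rightarrow> 'b \<Rightarrow> 'c" where
  "tlift scB scC tens f = (THE L. clinear_map scB scC L \<and> (\<forall>x y. L (tens x y) = f x y))"

section \<open>Laurent series in w^{-1}: coefficient functions with support bounded above\<close>

definition laurent :: "(int \<Rightarrow> 'b::zero) \<Rightarrow> bool" where
  "laurent F \<longleftrightarrow> (\<exists>N. \<forall>k>N. F k = 0)"

definition lmul :: "(int \<Rightarrow> 'b::ring) \<Rightarrow> (int \<Rightarrow> 'b) \<Rightarrow> int \<Rightarrow> 'b" where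
  "lmul F G k = (\<Sum>i | F i \<noteq> 0 \<and> G (k - i) \<noteq> 0. F i * G (k - i))"

definition lone :: "int \<Rightarrow> 'b::{zero,one}" where
  "lone k = (if k = 0 then 1 else 0)"

definition sigma2 :: "complex \<Rightarrow> complex \<Rightarrow> complex" where
  "sigma2 e1 e2 = e1^2 + e1 * e2 + e2^2"

definition sigma3 :: "complex \<Rightarrow> complex \<Rightarrow> complex \<Rightarrow> complex" where
  "sigma3 e1 e2 e3 = e1 * e2 * e3"

definition A_relations :: "(complex \<Rightarrow> 'a::ring_1) \<Rightarrow> complex \<Rightarrow> complex \<Rightarrow> complex
    \<Rightarrow> (nat \<Rightarrow> nat \<Rightarrow> 'a) \<Rightarrow> bool" where
  "A_relations sc e1 e2 e3 t \<longleftrightarrow> (\<forall>c d.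
     comm (t 0 0) (t c d) = 0
   \<and> comm (t 1 0) (t c d) = sc (of_nat d) * t c (d - 1)
   \<and> comm (t 0 1) (t c d) = sc (- of_nat c) * t (c - 1) d
   \<and> comm (t 2 0) (t c d) = sc (2 * of_nat d) * t (c + 1) (d - 1)
   \<and> comm (t 1 1) (t c d) = sc (of_nat d - of_nat c) * t c d
   \<and> comm (t 0 2) (t c d) = sc (- 2 * of_nat c) * t (c - 1) (d + 1)
   \<and> comm (t 3 0) (t c d) =
        sc (3 * of_nat d) * t (c + 2) (d - 1)
      + sc (sigma2 e1 e2 * of_nat d * (of_nat d - 1) * (of_nat d - 2) / 4) * t c (d - 3)
      + (if 3 \<le> d then
          sc (3 / 2 * sigma3 e1 e2 e3) *
          (\<Sum>m\<in>{0..d - 3}. \<Sum>n\<in>{0..c}.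
             sc (of_nat ((m + n + 1) choose (n + 1)) * of_nat (n + 1)
                 * of_nat ((d - m + c - n - 2) choose (c - n + 1)) * of_nat (c - n + 1)
                 / of_nat ((d + c) choose c))
             * (t n m * t (c - n) (d - 3 - m)))
         else 0))"

text \<open>Coefficient of w^k in Y(w) t_{0,n}.\<close>
definition Y_t0 :: "('a::ring_1 \<Rightarrow> 'a \<Rightarrow> 'b::ring_1) \<Rightarrow> (complex \<Rightarrow> 'b) \<Rightarrow> (nat \<Rightarrow> nat \<Rightarrow> 'a) \<Rightarrow> nat \<Rightarrow> int \<Rightarrow> 'b" where
  "Y_t0 tens sc2 t n k =
     (if k = 0 then tens 1 (t 0 n) else 0)
   + (if 0 \<le> k \<and> k \<le> int n then sc2 (of_nat (n choose nat k)) * tens (t 0 (n - nat k)) 1 else 0)"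

text \<open>Coefficient of w^k in Y(w) t_{2,0}.\<close>
definition Y_t2 :: "('a::ring_1 \<Rightarrow> 'a \<Rightarrow> 'b::ring_1) \<Rightarrow> (complex \<Rightarrow> 'b) \<Rightarrow> complex \<Rightarrow> (nat \<Rightarrow> nat \<Rightarrow> 'a) \<Rightarrow> int \<Rightarrow> 'b" where
  "Y_t2 tens sc2 s3 t k =
     (if k = 0 then tens 1 (t 2 0) + tens (t 2 0) 1 else 0)
   + (if k \<le> -2 then
        (\<Sum>n\<in>{0..nat (- k - 2)}. let m = nat (- k - 2) - n in
           sc2 (2 * s3 * of_nat (fact (m + n + 1)) / (of_nat (fact m) * of_nat (fact n)) * (-1) ^ n)
           * tens (t 0 n) (t 0 m))
      else 0)"

text \<open>D^* v = Res_w w^{-2} (Id \<otimes> c) Y(w) v, i.e. (Id \<otimes> c) applied to the w^1 coefficient.\<close>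
definition Dstar :: "(complex \<Rightarrow> 'a::ring_1) \<Rightarrow> (complex \<Rightarrow> 'b::ring_1) \<Rightarrow> ('a \<Rightarrow> 'a \<Rightarrow> 'b)
    \<Rightarrow> ('a \<Rightarrow> complex) \<Rightarrow> ('a \<Rightarrow> int \<Rightarrow> 'b) \<Rightarrow> 'a \<Rightarrow> 'a" where
  "Dstar sc sc2 tens c Y v = tlift sc2 sc tens (\<lambda>x y. sc (c y) * x) (Y v 1)"

end

theory Submission
  imports Defs
begin

text \<open>The map id_c = Id \<otimes> c is an algebra homomorphism, so the counit property
  (Id \<otimes> c) Y(w) v = v + O(w), checked on the generators t_{2,0} and t_{0,n}, propagates to
  all of A; the coefficient of w^1 in (Id \<otimes> c) Y(w) (u v) = ((Id \<otimes> c) Y(w) u) ((Id \<otimes> c) Y(w) v)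
  then makes D* a derivation. D* kills t_{2,0}, so it commutes with ad t_{2,0}, which raises
  the first index; this gives D*(t_{a,b}) = b t_{a,b-1} from the case a = 0.
  Both d/dw and Id \<otimes> D* are derivations of Laurent series, so the identity
  d/dw Y(w) = Y(w) D* - (Id \<otimes> D*) Y(w) is preserved by products and only has to be checked
  on the generators: for t_{0,n} it is the binomial identity (j+1) C(n,j+1) = n C(n-1,j), for
  t_{2,0} a recursion for the coefficients of Y(w) t_{2,0}.\<close>

section \<open>Linear and bilinear maps over an embedded copy of C\<close>

lemma calg_add: "calg sc \<Longrightarrow> sc (a + b) = sc a + sc b"
  unfolding calg_def by blast

lemma calg_mult: "calg sc \<Longrightarrow> sc (a * b) = sc a * sc b"
  unfolding calg_def by blast

lemma calg_one: "calg sc \<Longrightarrow> sc 1 = 1"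
  unfolding calg_def by blast

lemma calg_central: "calg sc \<Longrightarrow> sc z * x = x * sc z"
  unfolding calg_def by blast

lemma calg_central_left: "calg sc \<Longrightarrow> x * (sc z * y) = sc z * (x * y)"
  by (metis calg_central mult.assoc)

lemma calg_zero: "calg sc \<Longrightarrow> sc 0 = 0"
  using calg_add[of sc 0 0] by simp

lemma calg_minus: "calg sc \<Longrightarrow> sc (- a) = - sc a"
  using calg_add[of sc "- a" a] calg_zero[of sc] by (simp add: eq_neg_iff_add_eq_0)

lemma calg_diff: "calg sc \<Longrightarrow> sc (a - b) = sc a - sc b"
  using calg_add[of sc a "- b"] calg_minus[of sc b] by simp

lemma calg_of_nat: "calg sc \<Longrightarrow> sc (of_nat n) = of_nat n"
  by (induction n) (simp_all add: calg_zero calg_add calg_one)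

lemma calg_of_int: "calg sc \<Longrightarrow> sc (of_int n) = of_int n"
  by (cases n rule: int_cases) (simp_all add: calg_of_nat calg_minus calg_diff calg_one)

lemma clinear_map_add: "clinear_map scA scB f \<Longrightarrow> f (x + y) = f x + f y"
  unfolding clinear_map_def by blast

lemma clinear_map_scale: "clinear_map scA scB f \<Longrightarrow> f (scA z * x) = scB z * f x"
  unfolding clinear_map_def by blast

lemma clinear_map_zero: "clinear_map scA scB f \<Longrightarrow> f 0 = 0"
  using clinear_map_add[of scA scB f 0 0] by simp

lemma clinear_map_minus: "clinear_map scA scB f \<Longrightarrow> f (- x) = - f x"
  using clinear_map_add[of scA scB f "- x" x] clinear_map_zero[of scA scB f]
  by (simp add: eq_neg_iff_add_eq_0)

lemma clinear_map_diff: "clinear_map scA scB f \<Longrightarrow> f (x - y) = f x - f y"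
  using clinear_map_add[of scA scB f x "- y"] clinear_map_minus[of scA scB f y] by simp

lemma clinear_map_sum: "clinear_map scA scB f \<Longrightarrow> f (sum g S) = (\<Sum>i\<in>S. f (g i))"
  using sum_comp_morphism[of f g S] by (simp add: clinear_map_zero clinear_map_add o_def)

lemma cbilinearI:
  assumes "\<And>x x' y. f (x + x') y = f x y + f x' y"
    and "\<And>x y y'. f x (y + y') = f x y + f x y'"
    and "\<And>z x y. f (scA z * x) y = scB z * f x y"
    and "\<And>z x y. f x (scA z * y) = scB z * f x y"
  shows "cbilinear scA scB f"
  unfolding cbilinear_def clinear_map_def using assms by blast

lemma cbilinear_linear_left: "cbilinear scA scB f \<Longrightarrow> clinear_map scA scB (\<lambda>x. f x y)"
  unfolding cbilinear_def by blast

lemma cbilinear_linear_right: "cbilinear scA scB f \<Longrightarrow> clinear_map scA scB (f x)"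
  unfolding cbilinear_def by blast

lemma cbilinear_compose_linear:
  assumes "cbilinear scA scB f" "clinear_map scB scC L"
  shows "cbilinear scA scC (\<lambda>x y. L (f x y))"
  using assms unfolding cbilinear_def clinear_map_def by simp

section \<open>The tensor square\<close>

lemma tlift_universal:
  assumes "\<exists>!L. clinear_map scB scC L \<and> (\<forall>x y. L (tens x y) = f x y)"
  shows "clinear_map scB scC (tlift scB scC tens f)"
    and "tlift scB scC tens f (tens x y) = f x y"
  using theI'[OF assms] unfolding tlift_def by blast+

lemma linear_eq_on_tensors:
  assumes universal: "\<And>f. cbilinear scA scC f \<Longrightarrow>
      \<exists>!L. clinear_map scB scC L \<and> (\<forall>x y. L (tens x y) = f x y)"
    and tens: "cbilinear scA scB tens"
    and L1: "clinear_map scB scC L1" and L2: "clinear_map scB scC L2"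
    and agree: "\<And>x y. L1 (tens x y) = L2 (tens x y)"
  shows "L1 = L2"
  using universal[OF cbilinear_compose_linear[OF tens L1]] L1 L2 agree by metis

lemma bilinear_eq_on_tensors:
  assumes universal: "\<And>f. cbilinear scA scC f \<Longrightarrow>
      \<exists>!L. clinear_map scB scC L \<and> (\<forall>x y. L (tens x y) = f x y)"
    and tens: "cbilinear scA scB tens"
    and B1: "cbilinear scB scC B1" and B2: "cbilinear scB scC B2"
    and agree: "\<And>x y a b. B1 (tens x y) (tens a b) = B2 (tens x y) (tens a b)"
  shows "B1 x y = B2 x y"
proof -
  have "(\<lambda>x. B1 x (tens a b)) = (\<lambda>x. B2 x (tens a b))" for a b
    by (rule linear_eq_on_tensors[OF universal tens cbilinear_linear_left[OF B1]
          cbilinear_linear_left[OF B2] agree])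
  then have agree_right: "B1 x (tens a b) = B2 x (tens a b)" for a b
    by (rule fun_cong)
  have "B1 x = B2 x"
    by (rule linear_eq_on_tensors[OF universal tens cbilinear_linear_right[OF B1]
          cbilinear_linear_right[OF B2] agree_right])
  then show ?thesis by simp
qed

lemma tensor_square_universal_base:
  "is_tensor_square sc sc2 tens \<Longrightarrow> cbilinear sc sc f \<Longrightarrow>
     \<exists>!L. clinear_map sc2 sc L \<and> (\<forall>x y. L (tens x y) = f x y)"
  unfolding is_tensor_square_def by blast

lemma tensor_square_universal_square:
  "is_tensor_square sc sc2 tens \<Longrightarrow> cbilinear sc sc2 f \<Longrightarrow>
     \<exists>!L. clinear_map sc2 sc2 L \<and> (\<forall>x y. L (tens x y) = f x y)"
  unfolding is_tensor_square_def by blast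

lemma tensor_square_calg: "is_tensor_square sc sc2 tens \<Longrightarrow> calg sc2"
  unfolding is_tensor_square_def by blast

lemma tensor_square_cbilinear: "is_tensor_square sc sc2 tens \<Longrightarrow> cbilinear sc sc2 tens"
  unfolding is_tensor_square_def by blast

lemma tensor_square_one: "is_tensor_square sc sc2 tens \<Longrightarrow> tens 1 1 = 1"
  unfolding is_tensor_square_def by blast

lemma tensor_square_mult:
  "is_tensor_square sc sc2 tens \<Longrightarrow> tens x y * tens x' y' = tens (x * x') (y * y')"
  unfolding is_tensor_square_def by blast

lemma tensor_square_mult_cbilinear:
  assumes "is_tensor_square sc sc2 tens" "clinear_map sc2 scC L" "calg scC"
  shows "cbilinear sc2 scC (\<lambda>x y. L (x * y))"
  using assms by (intro cbilinearI)
    (simp_all add: distrib_left distrib_right clinear_map_add clinear_map_scale mult.assoc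
       calg_central_left[OF tensor_square_calg])

lemma id_tensor_character:
  fixes tens :: "'a::ring_1 \<Rightarrow> 'a \<Rightarrow> 'b::ring_1" and \<chi> :: "'a \<Rightarrow> complex"
    and x y :: 'b
  assumes ts: "is_tensor_square sc sc2 tens" and alg: "calg sc"
    and \<chi>_linear: "clinear_map sc (\<lambda>z. z) \<chi>"
    and \<chi>_mult: "\<And>u v. \<chi> (u * v) = \<chi> u * \<chi> v" and \<chi>_one: "\<chi> 1 = 1"
  defines "P \<equiv> tlift sc2 sc tens (\<lambda>x y. sc (\<chi> y) * x)"
  shows "clinear_map sc2 sc P"
    and "P (tens a b) = sc (\<chi> b) * a"
    and "P (x * y) = P x * P y"
    and "P 1 = 1"
proof -
  have scalar_swap: "sc w * (sc z * x) = sc z * (sc w * x)" for w z x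
    by (simp add: mult.assoc[symmetric] calg_mult[OF alg, symmetric] mult.commute)
  have bil: "cbilinear sc sc (\<lambda>x y. sc (\<chi> y) * x)"
    using \<chi>_linear by (intro cbilinearI)
      (simp_all add: distrib_left distrib_right clinear_map_add clinear_map_scale
         calg_add[OF alg] calg_mult[OF alg] scalar_swap mult.assoc)
  note universal = tensor_square_universal_base[OF ts]
  show lin: "clinear_map sc2 sc P" and tens: "\<And>x y. P (tens x y) = sc (\<chi> y) * x"
    unfolding P_def by (rule tlift_universal[OF universal[OF bil]])+
  have B2: "cbilinear sc2 sc (\<lambda>x y. P x * P y)"
    using lin by (intro cbilinearI)
      (simp_all add: distrib_left distrib_right clinear_map_add clinear_map_scale
         mult.assoc calg_central_left[OF alg])
  have agree: "P (tens x y * tens a b) = P (tens x y) * P (tens a b)" for x y a b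
    by (simp add: tensor_square_mult[OF ts] tens \<chi>_mult calg_mult[OF alg] mult.assoc
         calg_central_left[OF alg, of x "\<chi> b" a])
  show "P (x * y) = P x * P y"
    by (rule bilinear_eq_on_tensors[OF universal tensor_square_cbilinear[OF ts]
          tensor_square_mult_cbilinear[OF ts lin alg] B2 agree])
  show "P 1 = 1"
    using tens[of 1 1] by (simp add: tensor_square_one[OF ts] \<chi>_one calg_one[OF alg])
qed

lemma id_tensor_derivation:
  fixes tens :: "'a::ring_1 \<Rightarrow> 'a \<Rightarrow> 'b::ring_1" and \<delta> :: "'a \<Rightarrow> 'a"
    and x y :: 'b
  assumes ts: "is_tensor_square sc sc2 tens"
    and \<delta>_linear: "clinear_map sc sc \<delta>"
    and \<delta>_mult: "\<And>u v. \<delta> (u * v) = \<delta> u * v + u * \<delta> v"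
  defines "\<Delta> \<equiv> tlift sc2 sc2 tens (\<lambda>x y. tens x (\<delta> y))"
  shows "clinear_map sc2 sc2 \<Delta>"
    and "\<Delta> (tens a b) = tens a (\<delta> b)"
    and "\<Delta> (x * y) = \<Delta> x * y + x * \<Delta> y"
proof -
  have tb: "cbilinear sc sc2 tens" by (rule tensor_square_cbilinear[OF ts])
  have alg2: "calg sc2" by (rule tensor_square_calg[OF ts])
  have bil: "cbilinear sc sc2 (\<lambda>x y. tens x (\<delta> y))"
    using tb \<delta>_linear unfolding cbilinear_def clinear_map_def by simp
  note universal = tensor_square_universal_square[OF ts]
  show lin: "clinear_map sc2 sc2 \<Delta>" and tens: "\<And>x y. \<Delta> (tens x y) = tens x (\<delta> y)"
    unfolding \<Delta>_def by (rule tlift_universal[OF universal[OF bil]])+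
  have B2: "cbilinear sc2 sc2 (\<lambda>x y. \<Delta> x * y + x * \<Delta> y)"
    using lin by (intro cbilinearI)
      (simp_all add: distrib_left distrib_right clinear_map_add clinear_map_scale mult.assoc
         calg_central_left[OF alg2])
  have agree: "\<Delta> (tens x y * tens a b) = \<Delta> (tens x y) * tens a b + tens x y * \<Delta> (tens a b)"
    for x y a b
    by (simp add: tensor_square_mult[OF ts] tens \<delta>_mult
         clinear_map_add[OF cbilinear_linear_right[OF tb]])
  show "\<Delta> (x * y) = \<Delta> x * y + x * \<Delta> y"
    by (rule bilinear_eq_on_tensors[OF universal tb tensor_square_mult_cbilinear[OF ts lin alg2]
          B2 agree])
qed

section \<open>Laurent series in w^-1\<close>

lemma laurent_common_bound:
  assumes "finite S" "\<And>F. F \<in> S \<Longrightarrow> laurent F"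
  shows "\<exists>N. \<forall>F\<in>S. \<forall>i>N. F i = 0"
  using assms
proof (induction S rule: finite_induct)
  case (insert F S)
  obtain N1 where "\<forall>i>N1. F i = 0" using insert.prems laurent_def by blast
  moreover obtain N2 where "\<forall>G\<in>S. \<forall>i>N2. G i = 0" using insert by blast
  ultimately show ?case by (intro exI[of _ "max N1 N2"]) auto
qed simp

lemma laurent_map: "laurent F \<Longrightarrow> L 0 = 0 \<Longrightarrow> laurent (\<lambda>i. L (F i))"
  unfolding laurent_def by metis

lemma lmul_eq_sum:
  assumes "finite I" "\<And>i. i \<notin> I \<Longrightarrow> F i = 0 \<or> G (k - i) = 0"
  shows "lmul F G k = (\<Sum>i\<in>I. F i * G (k - i))"
  unfolding lmul_def using assms by (intro sum.mono_neutral_left) auto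

lemma lmul_eq_sum_bounded:
  assumes "\<forall>i>N. F i = 0" "\<forall>i>N. G i = 0" "finite I" "{k - N..N} \<subseteq> I"
  shows "lmul F G k = (\<Sum>i\<in>I. F i * G (k - i))"
proof (rule lmul_eq_sum[OF assms(3)])
  fix i assume "i \<notin> I"
  then have "i \<notin> {k - N..N}" using assms(4) by blast
  then have "i > N \<or> k - i > N" by auto
  then show "F i = 0 \<or> G (k - i) = 0" using assms(1,2) by blast
qed

lemma lmul_power_series:
  assumes "\<forall>i<0. F i = 0" "\<forall>i<0. G i = 0"
  shows "lmul F G k = (\<Sum>i\<in>{0..k}. F i * G (k - i))"
  by (rule lmul_eq_sum) (use assms in \<open>auto simp: not_le\<close>)

lemma lmul_diff_left:
  fixes F F' G :: "int \<Rightarrow> 'b::ring"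
  assumes "laurent F" "laurent F'" "laurent G"
  shows "lmul (\<lambda>i. F i - F' i) G k = lmul F G k - lmul F' G k"
proof -
  obtain N where N: "\<forall>H\<in>{F, F', G}. \<forall>i>N. H i = 0"
    using laurent_common_bound[of "{F, F', G}"] assms by auto
  have "\<forall>i>N. F i - F' i = 0" using N by simp
  then show ?thesis
    using N by (simp add: lmul_eq_sum_bounded[of N _ _ "{k - N..N}"] left_diff_distrib sum_subtractf)
qed

lemma lmul_diff_right:
  fixes F G G' :: "int \<Rightarrow> 'b::ring"
  assumes "laurent F" "laurent G" "laurent G'"
  shows "lmul F (\<lambda>i. G i - G' i) k = lmul F G k - lmul F G' k"
proof -
  obtain N where N: "\<forall>H\<in>{F, G, G'}. \<forall>i>N. H i = 0"
    using laurent_common_bound[of "{F, G, G'}"] assms by auto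
  have "\<forall>i>N. G i - G' i = 0" using N by simp
  then show ?thesis
    using N by (simp add: lmul_eq_sum_bounded[of N _ _ "{k - N..N}"] right_diff_distrib sum_subtractf)
qed

lemma lmul_map_hom:
  fixes L :: "'b::ring \<Rightarrow> 'c::ring"
  assumes add: "\<And>x y. L (x + y) = L x + L y" and mult: "\<And>x y. L (x * y) = L x * L y"
    and "laurent F" "laurent G"
  shows "L (lmul F G k) = lmul (\<lambda>i. L (F i)) (\<lambda>i. L (G i)) k"
proof -
  have "L 0 = 0" using add[of 0 0] by simp
  then have L_sum: "L (sum g A) = (\<Sum>x\<in>A. L (g x))" for g A
    using sum_comp_morphism[of L g A] add by (simp add: o_def)
  obtain N where "\<forall>H\<in>{F, G}. \<forall>i>N. H i = 0"
    using laurent_common_bound[of "{F, G}"] assms by auto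
  then have N: "\<forall>i>N. F i = 0" "\<forall>i>N. G i = 0" "\<forall>i>N. L (F i) = 0" "\<forall>i>N. L (G i) = 0"
    by (simp_all add: \<open>L 0 = 0\<close>)
  show ?thesis
    unfolding lmul_eq_sum_bounded[OF N(1,2) finite_atLeastAtMost order_refl]
      lmul_eq_sum_bounded[OF N(3,4) finite_atLeastAtMost order_refl]
    by (simp add: L_sum mult)
qed

lemma lmul_map_derivation:
  fixes L :: "'b::ring \<Rightarrow> 'b"
  assumes add: "\<And>x y. L (x + y) = L x + L y" and mult: "\<And>x y. L (x * y) = L x * y + x * L y"
    and "laurent F" "laurent G"
  shows "L (lmul F G k) = lmul (\<lambda>i. L (F i)) G k + lmul F (\<lambda>i. L (G i)) k"
proof -
  have "L 0 = 0" using add[of 0 0] by simp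
  then have L_sum: "L (sum g A) = (\<Sum>x\<in>A. L (g x))" for g A
    using sum_comp_morphism[of L g A] add by (simp add: o_def)
  obtain N where "\<forall>H\<in>{F, G}. \<forall>i>N. H i = 0"
    using laurent_common_bound[of "{F, G}"] assms by auto
  then have N: "\<forall>i>N. F i = 0" "\<forall>i>N. G i = 0" "\<forall>i>N. L (F i) = 0" "\<forall>i>N. L (G i) = 0"
    by (simp_all add: \<open>L 0 = 0\<close>)
  show ?thesis
    unfolding lmul_eq_sum_bounded[OF N(1,2) finite_atLeastAtMost order_refl]
      lmul_eq_sum_bounded[OF N(3,2) finite_atLeastAtMost order_refl]
      lmul_eq_sum_bounded[OF N(1,4) finite_atLeastAtMost order_refl]
    by (simp add: L_sum mult sum.distrib)
qed

lemma of_int_mult_split: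
  fixes x y :: "'b::ring_1"
  shows "of_int (m + n) * (x * y) = (of_int m * x) * y + x * (of_int n * y)"
proof -
  have "of_int (m + n) * (x * y) = of_int m * x * y + of_int n * x * y"
    by (simp add: distrib_right mult.assoc)
  also have "of_int n * x = x * of_int n"
    by (rule mult_of_int_commute)
  finally show ?thesis
    by (simp add: mult.assoc)
qed

lemma sum_shift_int_interval: "(\<Sum>i\<in>{a + 1..b + 1::int}. f i) = (\<Sum>j\<in>{a..b}. f (j + 1))"
proof -
  have "{a + 1..b + 1} = (\<lambda>j. j + 1) ` {a..b}" by simp
  then show ?thesis by (simp only: sum.reindex[OF inj_on_add'] o_def)
qed

definition lderiv :: "(int \<Rightarrow> 'b::ring_1) \<Rightarrow> int \<Rightarrow> 'b" where
  "lderiv F k = of_int (k + 1) * F (k + 1)"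

lemma lderiv_vanishes:
  assumes "\<forall>i>N. F i = 0"
  shows "\<forall>i>N. lderiv F i = 0"
  using assms by (simp add: lderiv_def)

lemma lmul_lderiv:
  fixes F G :: "int \<Rightarrow> 'b::ring_1"
  assumes "laurent F" "laurent G"
  shows "lderiv (lmul F G) k = lmul (lderiv F) G k + lmul F (lderiv G) k"
proof -
  obtain N where "\<forall>H\<in>{F, G}. \<forall>i>N. H i = 0"
    using laurent_common_bound[of "{F, G}"] assms by auto
  then have F: "\<forall>i>N. F i = 0" and G: "\<forall>i>N. G i = 0" by simp_all
  define I where "I = {k - N..N + 1}"
  have "lderiv (lmul F G) k = (\<Sum>i\<in>I. of_int (k + 1) * (F i * G (k + 1 - i)))"
    unfolding lderiv_def I_def
    by (subst lmul_eq_sum_bounded[OF F G, of "{k - N..N + 1}" "k + 1"]) (auto simp: sum_distrib_left)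
  also have "\<dots> = (\<Sum>i\<in>I. (of_int i * F i) * G (k + 1 - i))
      + (\<Sum>i\<in>I. F i * (of_int (k + 1 - i) * G (k + 1 - i)))"
    using of_int_mult_split[of i "k + 1 - i" "F i" "G (k + 1 - i)" for i]
    by (simp add: sum.distrib[symmetric])
  also have "(\<Sum>i\<in>I. (of_int i * F i) * G (k + 1 - i)) = lmul (lderiv F) G k"
  proof -
    have "(\<Sum>i\<in>I. (of_int i * F i) * G (k + 1 - i))
        = (\<Sum>j\<in>{k - N - 1..N}. (of_int (j + 1) * F (j + 1)) * G (k + 1 - (j + 1)))"
      using sum_shift_int_interval[of "\<lambda>i. (of_int i * F i) * G (k + 1 - i)" "k - N - 1" N]
      unfolding I_def by (simp only: diff_add_cancel)
    also have "\<dots> = (\<Sum>j\<in>{k - N - 1..N}. lderiv F j * G (k - j))"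
      by (simp add: lderiv_def)
    also have "\<dots> = lmul (lderiv F) G k"
      by (rule lmul_eq_sum_bounded[OF lderiv_vanishes[OF F] G, symmetric]) auto
    finally show ?thesis .
  qed
  also have "(\<Sum>i\<in>I. F i * (of_int (k + 1 - i) * G (k + 1 - i))) = lmul F (lderiv G) k"
    unfolding I_def
    by (subst lmul_eq_sum_bounded[OF F lderiv_vanishes[OF G], of "{k - N..N + 1}"])
      (auto simp: lderiv_def diff_add_eq)
  finally show ?thesis .
qed

section \<open>The coproduct Y(w) and the derivation D*\<close>

locale coproduct_with_counit =
  fixes sc :: "complex \<Rightarrow> 'a::ring_1" and sc2 :: "complex \<Rightarrow> 'b::ring_1"
    and tens :: "'a \<Rightarrow> 'a \<Rightarrow> 'b"
    and Y :: "'a \<Rightarrow> int \<Rightarrow> 'b"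
    and c :: "'a \<Rightarrow> complex"
  assumes alg: "calg sc"
    and tensor: "is_tensor_square sc sc2 tens"
    and Y_laurent: "\<forall>v. laurent (Y v)"
    and Y_add: "\<forall>u v. Y (u + v) = (\<lambda>k. Y u k + Y v k)"
    and Y_scal: "\<forall>z v. Y (sc z * v) = (\<lambda>k. sc2 z * Y v k)"
    and Y_mult: "\<forall>u v. Y (u * v) = lmul (Y u) (Y v)"
    and Y_one: "Y 1 = lone"
    and c_lin: "clinear_map sc (\<lambda>z. z) c"
    and c_mult: "\<forall>u v. c (u * v) = c u * c v"
    and c_one: "c 1 = 1"
begin

lemma alg2: "calg sc2"
  by (rule tensor_square_calg[OF tensor])

lemma Y_apply_add: "Y (u + v) k = Y u k + Y v k"
  using Y_add by simp

lemma Y_apply_scale: "Y (sc z * v) k = sc2 z * Y v k"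
  using Y_scal by simp

lemma Y_zero: "Y 0 k = 0"
  using Y_apply_add[of 0 0 k] by simp

lemma tens_zero_right: "tens x 0 = 0"
  by (rule clinear_map_zero[OF cbilinear_linear_right[OF tensor_square_cbilinear[OF tensor]]])

lemma tens_scale_right: "tens x (sc z * y) = sc2 z * tens x y"
  by (rule clinear_map_scale[OF cbilinear_linear_right[OF tensor_square_cbilinear[OF tensor]]])

lemma Y_scalar: "Y (sc z) k = sc2 z * lone k"
  using Y_apply_scale[of z 1 k] Y_one by simp

definition id_c :: "'b \<Rightarrow> 'a" where
  "id_c = tlift sc2 sc tens (\<lambda>x y. sc (c y) * x)"

lemma id_c_linear: "clinear_map sc2 sc id_c"
  and id_c_tens: "id_c (tens a b) = sc (c b) * a"
  and id_c_mult: "id_c (x * y) = id_c x * id_c y"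
  and id_c_one: "id_c 1 = 1"
  unfolding id_c_def using c_mult c_one
  by (simp_all add: id_tensor_character[OF tensor alg c_lin])

lemma id_c_scalar: "id_c (sc2 z) = sc z"
  using clinear_map_scale[OF id_c_linear, of z 1] id_c_one by simp

lemma id_c_Y_mult: "id_c (Y (u * v) k) = lmul (\<lambda>i. id_c (Y u i)) (\<lambda>i. id_c (Y v i)) k"
  unfolding Y_mult[rule_format]
  by (rule lmul_map_hom) (simp_all add: clinear_map_add[OF id_c_linear] id_c_mult Y_laurent)

definition counital :: "'a \<Rightarrow> bool" where
  "counital v \<longleftrightarrow> (\<forall>k<0. id_c (Y v k) = 0) \<and> id_c (Y v 0) = v"

lemma id_c_Y_mult_counital:
  assumes "counital u" "counital v"
  shows "id_c (Y (u * v) k) = (\<Sum>i\<in>{0..k}. id_c (Y u i) * id_c (Y v (k - i)))"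
  using assms unfolding id_c_Y_mult counital_def by (intro lmul_power_series) auto

lemma counital_mult:
  assumes "counital u" "counital v"
  shows "counital (u * v)"
  using assms(1,2)[unfolded counital_def]
  by (simp add: counital_def id_c_Y_mult_counital[OF assms])

lemma counital_add: "counital u \<Longrightarrow> counital v \<Longrightarrow> counital (u + v)"
  by (simp add: counital_def Y_apply_add clinear_map_add[OF id_c_linear])

lemma counital_scalar: "counital (sc z)"
  by (simp add: counital_def Y_scalar lone_def id_c_scalar clinear_map_zero[OF id_c_linear])

lemma counital_alg_gen:
  assumes "v \<in> alg_gen sc G" "\<And>x. x \<in> G \<Longrightarrow> counital x"
  shows "counital v"
  using assms by (induction rule: alg_gen.induct) (simp_all add: counital_scalar counital_add counital_mult)

definition D :: "'a \<Rightarrow> 'a" where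
  "D v = id_c (Y v 1)"

lemma Dstar_eq: "Dstar sc sc2 tens c Y = D"
  unfolding Dstar_def D_def id_c_def ..

lemma D_linear: "clinear_map sc sc D"
  unfolding clinear_map_def D_def
  by (simp add: Y_apply_add Y_apply_scale clinear_map_add[OF id_c_linear] clinear_map_scale[OF id_c_linear])

lemma D_mult_counital:
  assumes "counital u" "counital v"
  shows "D (u * v) = D u * v + u * D v"
proof -
  have "{0..1::int} = {0, 1}" by auto
  then show ?thesis
    using assms unfolding D_def counital_def id_c_Y_mult_counital[OF assms] by simp
qed

end

locale affine_yangian_coproduct = coproduct_with_counit +
  fixes e1 e2 e3 :: complex and t :: "nat \<Rightarrow> nat \<Rightarrow> 'a"
  assumes rels: "A_relations sc e1 e2 e3 t"
    and generated: "alg_gen sc ({t 2 0} \<union> range (t 0)) = UNIV"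
    and Y_t0n: "\<forall>n. Y (t 0 n) = Y_t0 tens sc2 t n"
    and Y_t20: "Y (t 2 0) = Y_t2 tens sc2 (sigma3 e1 e2 e3) t"
    and c_t: "\<forall>a b. c (t a b) = 0"
begin

lemma id_c_tens_t: "id_c (tens x (t a b)) = 0"
  by (simp add: id_c_tens c_t calg_zero[OF alg])

lemma id_c_tens_one: "id_c (tens x 1) = x"
  by (simp add: id_c_tens c_one calg_one[OF alg])

lemma counital_t0: "counital (t 0 n)"
  by (simp add: counital_def Y_t0n Y_t0_def id_c_tens_t id_c_tens_one clinear_map_add[OF id_c_linear]
      clinear_map_scale[OF id_c_linear] clinear_map_zero[OF id_c_linear] calg_one[OF alg])

lemma counital_t20: "counital (t 2 0)"
  by (simp add: counital_def Y_t20 Y_t2_def Let_def id_c_tens_t id_c_tens_one clinear_map_add[OF id_c_linear]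
      clinear_map_scale[OF id_c_linear] clinear_map_zero[OF id_c_linear] clinear_map_sum[OF id_c_linear])

lemma counital_all: "counital v"
  using counital_alg_gen[of v] generated counital_t0 counital_t20 by auto

lemma D_derivation: "D (u * v) = D u * v + u * D v"
  by (rule D_mult_counital[OF counital_all counital_all])

lemma D_one: "D 1 = 0"
  by (simp add: D_def Y_one lone_def clinear_map_zero[OF id_c_linear])

lemma D_t0: "D (t 0 n) = sc (of_nat n) * t 0 (n - 1)"
  by (cases n) (simp_all add: D_def Y_t0n Y_t0_def clinear_map_scale[OF id_c_linear]
      clinear_map_zero[OF id_c_linear] id_c_tens_one calg_zero[OF alg])

lemma D_t20: "D (t 2 0) = 0"
  by (simp add: D_def Y_t20 Y_t2_def clinear_map_zero[OF id_c_linear])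

lemma D_comm: "D (comm x y) = comm (D x) y + comm x (D y)"
  unfolding comm_def by (simp add: clinear_map_diff[OF D_linear] D_derivation algebra_simps)

lemma comm_scale_right: "comm x (sc z * y) = sc z * comm x y"
  unfolding comm_def by (simp add: right_diff_distrib mult.assoc calg_central_left[OF alg])

lemma comm_t20: "comm (t 2 0) (t a b) = sc (2 * of_nat b) * t (a + 1) (b - 1)"
  using rels unfolding A_relations_def by blast

text \<open>Since D kills t_{2,0}, it commutes with ad t_{2,0}, which raises the first index.\<close>
lemma D_t: "D (t a b) = sc (of_nat b) * t a (b - 1)"
proof (induction a arbitrary: b)
  case 0
  show ?case by (rule D_t0)
next
  case (Suc a)
  define q :: complex where "q = 2 * of_nat (Suc b)"
  have q: "q \<noteq> 0" unfolding q_def by (simp del: of_nat_Suc)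
  have "sc (1 / q) * comm (t 2 0) (t a (Suc b)) = (sc (1 / q) * sc q) * t (Suc a) b"
    using comm_t20[of a "Suc b"] by (simp add: q_def mult.assoc)
  also have "sc (1 / q) * sc q = 1"
    using q by (simp add: calg_mult[OF alg, symmetric] calg_one[OF alg])
  finally have t_Suc: "t (Suc a) b = sc (1 / q) * comm (t 2 0) (t a (Suc b))"
    by simp
  have "D (t (Suc a) b) = sc (1 / q) * comm (t 2 0) (sc (of_nat (Suc b)) * t a b)"
    by (subst t_Suc) (simp add: clinear_map_scale[OF D_linear] D_comm D_t20 comm_def[of 0] Suc)
  also have "\<dots> = sc (1 / q) * sc (of_nat (Suc b)) * sc (2 * of_nat b) * t (Suc a) (b - 1)"
    by (simp add: comm_scale_right comm_t20 mult.assoc)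
  also have "\<dots> = sc (1 / q * of_nat (Suc b) * (2 * of_nat b)) * t (Suc a) (b - 1)"
    by (simp only: calg_mult[OF alg])
  also have "1 / q * of_nat (Suc b) * (2 * of_nat b) = (of_nat b :: complex)"
    using q unfolding q_def by (simp add: field_simps)
  finally show ?case .
qed

definition id_D :: "'b \<Rightarrow> 'b" where
  "id_D = tlift sc2 sc2 tens (\<lambda>x y. tens x (D y))"

lemma id_D_linear: "clinear_map sc2 sc2 id_D"
  and id_D_tens: "id_D (tens a b) = tens a (D b)"
  and id_D_mult: "id_D (x * y) = id_D x * y + x * id_D y"
  unfolding id_D_def by (simp_all add: id_tensor_derivation[OF tensor D_linear D_derivation])

lemma id_D_zero: "id_D 0 = 0"
  by (rule clinear_map_zero[OF id_D_linear])

lemma id_D_one: "id_D 1 = 0"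
  using id_D_tens[of 1 1] by (simp add: tensor_square_one[OF tensor] D_one tens_zero_right)

definition deriv_identity :: "'a \<Rightarrow> bool" where
  "deriv_identity v \<longleftrightarrow> (\<forall>k. lderiv (Y v) k = Y (D v) k - id_D (Y v k))"

lemma deriv_identity_mult:
  assumes "deriv_identity u" "deriv_identity v"
  shows "deriv_identity (u * v)"
  unfolding deriv_identity_def
proof
  fix k
  have laurent: "laurent (Y w)" "laurent (\<lambda>i. id_D (Y w i))" for w
    by (simp_all add: Y_laurent laurent_map id_D_zero)
  have deriv: "lderiv (Y w) = (\<lambda>i. Y (D w) i - id_D (Y w i))" if "deriv_identity w" for w
    using that unfolding deriv_identity_def by blast
  have "lderiv (Y (u * v)) k = lmul (lderiv (Y u)) (Y v) k + lmul (Y u) (lderiv (Y v)) k"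
    unfolding Y_mult[rule_format] by (rule lmul_lderiv[OF laurent(1) laurent(1)])
  also have "\<dots> = (lmul (Y (D u)) (Y v) k + lmul (Y u) (Y (D v)) k)
      - (lmul (\<lambda>i. id_D (Y u i)) (Y v) k + lmul (Y u) (\<lambda>i. id_D (Y v i)) k)"
    unfolding deriv[OF assms(1)] deriv[OF assms(2)]
    by (simp add: lmul_diff_left lmul_diff_right laurent)
  also have "\<dots> = Y (D (u * v)) k - id_D (Y (u * v) k)"
    by (simp add: D_derivation Y_apply_add Y_mult[rule_format] laurent
        lmul_map_derivation[OF clinear_map_add[OF id_D_linear] id_D_mult])
  finally show "lderiv (Y (u * v)) k = Y (D (u * v)) k - id_D (Y (u * v) k)" .
qed

lemma deriv_identity_add: "deriv_identity u \<Longrightarrow> deriv_identity v \<Longrightarrow> deriv_identity (u + v)"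
  by (simp add: deriv_identity_def lderiv_def Y_apply_add distrib_left clinear_map_add[OF D_linear]
      clinear_map_add[OF id_D_linear])

lemma deriv_identity_scalar: "deriv_identity (sc z)"
proof -
  have "D (sc z) = 0"
    using clinear_map_scale[OF D_linear, of z 1] D_one by simp
  moreover have "lderiv (Y (sc z)) k = 0" for k
  proof (cases "k + 1 = 0")
    case True
    show ?thesis unfolding lderiv_def True by simp
  next
    case False
    then show ?thesis by (simp add: lderiv_def Y_scalar lone_def)
  qed
  ultimately show ?thesis
    by (simp add: deriv_identity_def Y_zero Y_scalar lone_def clinear_map_scale[OF id_D_linear] id_D_one id_D_zero)
qed

lemma deriv_identity_alg_gen:
  assumes "v \<in> alg_gen sc G" "\<And>x. x \<in> G \<Longrightarrow> deriv_identity x"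
  shows "deriv_identity v"
  using assms by (induction rule: alg_gen.induct) (simp_all add: deriv_identity_scalar deriv_identity_add deriv_identity_mult)


lemma Y_t0_coeff:
  "Y (t 0 n) (int j) = (if j = 0 then tens 1 (t 0 n) else 0)
     + (if j \<le> n then sc2 (of_nat (n choose j)) * tens (t 0 (n - j)) 1 else 0)"
  by (simp add: Y_t0n Y_t0_def)

lemma Y_t0_negative: "k < 0 \<Longrightarrow> Y (t 0 n) k = 0"
  by (simp add: Y_t0n Y_t0_def)

lemma id_D_Y_t0: "id_D (Y (t 0 n) k) = (if k = 0 then sc2 (of_nat n) * tens 1 (t 0 (n - 1)) else 0)"
  by (simp add: Y_t0n Y_t0_def clinear_map_add[OF id_D_linear] clinear_map_scale[OF id_D_linear]
      id_D_zero id_D_tens D_one D_t0 tens_zero_right tens_scale_right)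

lemma deriv_identity_t0: "deriv_identity (t 0 n)"
  unfolding deriv_identity_def lderiv_def
proof
  fix k
  show "of_int (k + 1) * Y (t 0 n) (k + 1) = Y (D (t 0 n)) k - id_D (Y (t 0 n) k)"
  proof (cases "k \<ge> 0")
    case False
    have "of_int (k + 1) * Y (t 0 n) (k + 1) = 0"
      using False by (cases "k + 1 = 0") (simp_all add: Y_t0_negative)
    then show ?thesis
      using False by (simp add: D_t0 Y_apply_scale Y_t0_negative id_D_zero)
  next
    case True
    then obtain j where k: "k = int j" by (metis nonneg_eq_int)
    have k1: "k + 1 = int (Suc j)" using k by simp
    have "(of_nat (Suc j) :: 'b) = sc2 (of_nat (Suc j))"
      by (simp only: calg_of_nat[OF alg2])
    then have lhs: "of_int (k + 1) * Y (t 0 n) (k + 1) =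
        (if Suc j \<le> n then sc2 (of_nat (Suc j) * of_nat (n choose Suc j)) * tens (t 0 (n - Suc j)) 1
         else 0)"
      unfolding k1 Y_t0_coeff of_int_of_nat_eq by (simp add: calg_mult[OF alg2] mult.assoc)
    have rhs: "Y (D (t 0 n)) k - id_D (Y (t 0 n) k) = sc2 (of_nat n) *
        (if j \<le> n - 1 then sc2 (of_nat ((n - 1) choose j)) * tens (t 0 (n - 1 - j)) 1 else 0)"
      unfolding k id_D_Y_t0 by (simp add: D_t0 Y_apply_scale Y_t0_coeff distrib_left)
    show ?thesis
    proof (cases n)
      case 0
      then show ?thesis using lhs rhs by (simp add: calg_zero[OF alg2])
    next
      case (Suc m)
      have "(of_nat (Suc j) * of_nat (Suc m choose Suc j) :: complex) = of_nat (Suc m) * of_nat (m choose j)"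
        by (metis Suc_times_binomial of_nat_mult)
      then show ?thesis using lhs rhs Suc by (simp add: calg_mult[OF alg2] mult.assoc)
    qed
  qed
qed

definition t20_coeff :: "nat \<Rightarrow> nat \<Rightarrow> complex" where
  "t20_coeff n m = 2 * sigma3 e1 e2 e3 * of_nat (fact (m + n + 1)) / (of_nat (fact m) * of_nat (fact n)) * (-1) ^ n"

text \<open>Differentiating w^(-n-m-2) produces the factor -(n+m+2), which this recursion turns into
  the factor m + 1 created by D on the second tensor factor t_{0,m+1}.\<close>
lemma t20_coeff_rec: "(of_nat (m + n) + 2) * t20_coeff n m = t20_coeff n (Suc m) * of_nat (Suc m)"
proof -
  have fact_Suc: "(of_nat (fact (Suc m + n + 1)) :: complex) = (of_nat (m + n) + 2) * of_nat (fact (m + n + 1))"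
    "(of_nat (fact (Suc m)) :: complex) = of_nat (Suc m) * of_nat (fact m)"
    by (simp_all add: algebra_simps)
  have "(of_nat (fact m) :: complex) \<noteq> 0" "(of_nat (fact n) :: complex) \<noteq> 0"
    "(of_nat (Suc m) :: complex) \<noteq> 0"
    by (simp_all del: of_nat_Suc)
  moreover have "s \<noteq> 0 \<Longrightarrow> A \<noteq> 0 \<Longrightarrow> B \<noteq> 0 \<Longrightarrow>
      K * (a * F / (A * B) * x) = a * (K * F) / (s * A * B) * x * s" for K a F A B x s :: complex
    by (simp add: field_simps)
  ultimately show ?thesis
    unfolding t20_coeff_def fact_Suc by blast
qed

lemma Y_t20_negative:
  "Y (t 2 0) (- int N - 2) = (\<Sum>n\<in>{0..N}. sc2 (t20_coeff n (N - n)) * tens (t 0 n) (t 0 (N - n)))"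
  by (simp add: Y_t20 Y_t2_def Let_def t20_coeff_def)

lemma Y_t20_vanishes: "-2 < k \<Longrightarrow> k \<noteq> 0 \<Longrightarrow> Y (t 2 0) k = 0"
  by (simp add: Y_t20 Y_t2_def)

lemma id_D_Y_t20_zero: "id_D (Y (t 2 0) 0) = 0"
  by (simp add: Y_t20 Y_t2_def clinear_map_add[OF id_D_linear] id_D_tens D_t20 D_one tens_zero_right)

lemma id_D_Y_t20_negative:
  "id_D (Y (t 2 0) (- int N - 2)) = sc2 (of_nat N + 1) * Y (t 2 0) (- int N - 1)"
proof -
  have id_D_Y: "id_D (Y (t 2 0) (- int N - 2)) =
      (\<Sum>n\<in>{0..N}. sc2 (t20_coeff n (N - n)) * tens (t 0 n) (sc (of_nat (N - n)) * t 0 (N - n - 1)))"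
    by (simp add: Y_t20_negative clinear_map_sum[OF id_D_linear] clinear_map_scale[OF id_D_linear]
        id_D_tens D_t0 del: of_nat_diff)
  show ?thesis
  proof (cases N)
    case 0
    show ?thesis
      unfolding id_D_Y using 0 by (simp add: Y_t20_vanishes calg_zero[OF alg] tens_zero_right)
  next
    case (Suc M)
    have "id_D (Y (t 2 0) (- int N - 2)) =
        (\<Sum>n\<in>{0..M}. sc2 (t20_coeff n (N - n)) * tens (t 0 n) (sc (of_nat (N - n)) * t 0 (N - n - 1)))"
      by (subst id_D_Y) (simp add: Suc calg_zero[OF alg] tens_zero_right del: of_nat_diff)
    also have "\<dots> = (\<Sum>n\<in>{0..M}. sc2 (of_nat M + 2) * (sc2 (t20_coeff n (M - n)) * tens (t 0 n) (t 0 (M - n))))"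
    proof (rule sum.cong[OF refl])
      fix n assume "n \<in> {0..M}"
      then have N_n: "N - n = Suc (M - n)" using Suc by simp
      have "sc2 (t20_coeff n (Suc (M - n))) * tens (t 0 n) (sc (of_nat (Suc (M - n))) * t 0 (M - n))
          = sc2 (t20_coeff n (Suc (M - n)) * of_nat (Suc (M - n))) * tens (t 0 n) (t 0 (M - n))"
        by (simp only: tens_scale_right calg_mult[OF alg2] mult.assoc)
      also have "t20_coeff n (Suc (M - n)) * of_nat (Suc (M - n)) = (of_nat M + 2) * t20_coeff n (M - n)"
        using t20_coeff_rec[of "M - n" n] \<open>n \<in> {0..M}\<close> by simp
      finally show "sc2 (t20_coeff n (N - n)) * tens (t 0 n) (sc (of_nat (N - n)) * t 0 (N - n - 1)) =
          sc2 (of_nat M + 2) * (sc2 (t20_coeff n (M - n)) * tens (t 0 n) (t 0 (M - n)))"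
        unfolding N_n diff_Suc_1 by (simp only: calg_mult[OF alg2] mult.assoc)
    qed
    also have "\<dots> = sc2 (of_nat N + 1) * Y (t 2 0) (- int N - 1)"
      using Y_t20_negative[of M] by (simp add: Suc sum_distrib_left algebra_simps)
    finally show ?thesis .
  qed
qed

lemma deriv_identity_t20: "deriv_identity (t 2 0)"
  unfolding deriv_identity_def
proof
  fix k
  show "lderiv (Y (t 2 0)) k = Y (D (t 2 0)) k - id_D (Y (t 2 0) k)"
  proof (cases "k \<le> -2")
    case True
    define N where "N = nat (- k - 2)"
    have k: "k = - int N - 2" using True unfolding N_def by simp
    have "k + 1 = - int N - 1" using k by simp
    then have "lderiv (Y (t 2 0)) k = of_int (- int N - 1) * Y (t 2 0) (- int N - 1)"
      unfolding lderiv_def by (simp only:)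
    also have "(of_int (- int N - 1) :: 'b) = - sc2 (of_nat N + 1)"
    proof -
      have "- (of_nat N + 1) = (of_int (- int N - 1) :: complex)" by simp
      then show ?thesis by (simp only: calg_minus[OF alg2, symmetric] calg_of_int[OF alg2])
    qed
    also have "- sc2 (of_nat N + 1) * Y (t 2 0) (- int N - 1) = - id_D (Y (t 2 0) k)"
      unfolding k id_D_Y_t20_negative by simp
    finally show ?thesis by (simp add: D_t20 Y_zero)
  next
    case False
    have "lderiv (Y (t 2 0)) k = 0"
    proof (cases "k + 1 = 0")
      case True
      show ?thesis unfolding lderiv_def True by simp
    next
      case False
      then show ?thesis using \<open>\<not> k \<le> -2\<close> by (simp add: lderiv_def Y_t20_vanishes)
    qed
    moreover have "id_D (Y (t 2 0) k) = 0"
      using False by (cases "k = 0") (simp_all add: id_D_Y_t20_zero Y_t20_vanishes id_D_zero)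
    ultimately show ?thesis by (simp add: D_t20 Y_zero)
  qed
qed

lemma deriv_identity_all: "deriv_identity v"
  using deriv_identity_alg_gen[of v] generated deriv_identity_t0 deriv_identity_t20 by auto

end

theorem mainTheorem2:
  fixes sc :: "complex \<Rightarrow> 'a::ring_1" and sc2 :: "complex \<Rightarrow> 'b::ring_1"
    and tens :: "'a \<Rightarrow> 'a \<Rightarrow> 'b"
    and e1 e2 e3 :: complex
    and t :: "nat \<Rightarrow> nat \<Rightarrow> 'a"
    and Y :: "'a \<Rightarrow> int \<Rightarrow> 'b"
    and c :: "'a \<Rightarrow> complex"
  assumes eps: "e1 + e2 + e3 = 0"
    and alg: "calg sc"
    and tensor: "is_tensor_square sc sc2 tens"
    and rels: "A_relations sc e1 e2 e3 t"
    and generated: "alg_gen sc ({t 2 0} \<union> range (t 0)) = UNIV"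
    and Y_laurent: "\<forall>v. laurent (Y v)"
    and Y_add: "\<forall>u v. Y (u + v) = (\<lambda>k. Y u k + Y v k)"
    and Y_scal: "\<forall>z v. Y (sc z * v) = (\<lambda>k. sc2 z * Y v k)"
    and Y_mult: "\<forall>u v. Y (u * v) = lmul (Y u) (Y v)"
    and Y_one: "Y 1 = lone"
    and Y_t0n: "\<forall>n. Y (t 0 n) = Y_t0 tens sc2 t n"
    and Y_t20: "Y (t 2 0) = Y_t2 tens sc2 (sigma3 e1 e2 e3) t"
    and c_lin: "clinear_map sc (\<lambda>z. z) c"
    and c_mult: "\<forall>u v. c (u * v) = c u * c v"
    and c_one: "c 1 = 1"
    and c_t: "\<forall>a b. c (t a b) = 0"
  shows "let D = Dstar sc sc2 tens c Y;
             IdD = tlift sc2 sc2 tens (\<lambda>x y. tens x (D y))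
         in clinear_map sc sc D
          \<and> (\<forall>u v. D (u * v) = D u * v + u * D v)
          \<and> (\<forall>a b. D (t a b) = sc (of_nat b) * t a (b - 1))
          \<and> (\<forall>v k. of_int (k + 1) * Y v (k + 1) = Y (D v) k - IdD (Y v k))"
proof -
  interpret affine_yangian_coproduct sc sc2 tens Y c e1 e2 e3 t
    by unfold_locales (fact assms)+
  show ?thesis
    unfolding Let_def Dstar_eq id_D_def[symmetric]
    using D_linear D_derivation D_t deriv_identity_all unfolding deriv_identity_def lderiv_def by blast
qed

end
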